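(* For every $n$-outcome forecast domain $\mathcal{D}$, the quadratic scoring rule $s(\mathbf{p};j)=2p_j-\sum_{k=1}^n p_k^2$ on $\mathcal{D}$ has convex exposure.
   Context: $\Delta^n$ is the standard simplex in $\mathbb{R}^n$; an $n$-outcome forecast domain is a convex $(n-1)$-dimensional subset of $\Delta^n$. For a proper scoring rule $s$ with expected reward function $G(\mathbf{p})=\sum_j p_j s(\mathbf{p};j)$ (here $G(\mathbf{p})=\sum_j p_j^2$), the exposure function is $\mathbf{g}=\nabla G$, with values understood modulo translation by the all-ones vector (equivalently projected onto $\{\mathbf{x}:\sum_i x_i=0\}$). Convex exposure means the range of $\mathbf{g}$ on $\mathcal{D}$ is a convex set. *)

theory Defs
  imports "HOL-Analysis.Analysis"
begin

text \<open>Outcomes are indexed by a finite type 'n (n = CARD('n)); forecasts live in real^'n.\<close>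

definition prob_simplex :: "(real ^ 'n::finite) set" where
  "prob_simplex = {p. (\<forall>i. 0 \<le> p $ i) \<and> (\<Sum>i\<in>UNIV. p $ i) = 1}"

definition forecast_domain :: "(real ^ 'n::finite) set \<Rightarrow> bool" where
  "forecast_domain D \<longleftrightarrow> D \<subseteq> prob_simplex \<and> convex D \<and> aff_dim D = int CARD('n) - 1"

definition quad_score :: "real ^ 'n::finite \<Rightarrow> 'n \<Rightarrow> real" where
  "quad_score p j = 2 * p $ j - (\<Sum>k\<in>UNIV. (p $ k)^2)"

definition expected_reward :: "(real ^ 'n::finite \<Rightarrow> 'n \<Rightarrow> real) \<Rightarrow> real ^ 'n \<Rightarrow> real" where
  "expected_reward s p = (\<Sum>j\<in>UNIV. p $ j * s p j)"

definition exposure :: "(real ^ 'n::finite \<Rightarrow> 'n \<Rightarrow> real) \<Rightarrow> real ^ 'n \<Rightarrow> real ^ 'n" where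
  "exposure s p = (THE g. (expected_reward s has_derivative (\<lambda>h. g \<bullet> h)) (at p))"

text \<open>Projection onto {x. sum_i x_i = 0}, i.e. quotient by translation along the all-ones vector.\<close>
definition proj0 :: "real ^ 'n::finite \<Rightarrow> real ^ 'n" where
  "proj0 x = x - ((\<Sum>i\<in>UNIV. x $ i) / real CARD('n)) *\<^sub>R (\<chi> i. 1)"

definition convex_exposure :: "(real ^ 'n::finite \<Rightarrow> 'n \<Rightarrow> real) \<Rightarrow> (real ^ 'n) set \<Rightarrow> bool" where
  "convex_exposure s D \<longleftrightarrow> convex ((\<lambda>p. proj0 (exposure s p)) ` D)"

end

theory Submission
  imports Defs
begin

text \<open>On the simplex, the gradient of \<open>G(p) = 2 |p|\<^sup>2 - (\<Sum>\<^sub>i p\<^sub>i) |p|\<^sup>2\<close> is \<open>2 p\<close> minus a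
  multiple of the all-ones vector. Modulo that vector the exposure is therefore the linear map
  \<open>p \<mapsto> 2 p\<close>, and linear images of convex sets are convex.\<close>

lemma exposure_eqI:
  assumes "(expected_reward s has_derivative (\<lambda>h. g \<bullet> h)) (at p)"
  shows "exposure s p = g"
  unfolding exposure_def
proof (rule the_equality)
  fix g' assume "(expected_reward s has_derivative (\<lambda>h. g' \<bullet> h)) (at p)"
  then have "(\<lambda>h. g' \<bullet> h) = (\<lambda>h. g \<bullet> h)"
    using assms by (rule has_derivative_unique)
  then show "g' = g"
    by (metis vector_eq_rdot)
qed (fact assms)

lemma expected_reward_quad_score:
  "expected_reward quad_score p = 2 * (p \<bullet> p) - (p \<bullet> (\<chi> i. 1)) * (p \<bullet> p)"
proof -
  have "expected_reward quad_score p = (\<Sum>j\<in>UNIV. 2 * (p $ j * p $ j) - p $ j * (p \<bullet> p))"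
    by (simp add: expected_reward_def quad_score_def inner_vec_def power2_eq_square algebra_simps)
  also have "\<dots> = 2 * (p \<bullet> p) - (p \<bullet> (\<chi> i. 1)) * (p \<bullet> p)"
    by (simp only: sum_subtractf sum_distrib_right[symmetric] sum_distrib_left[symmetric])
       (simp add: inner_vec_def)
  finally show ?thesis .
qed

lemma has_derivative_expected_reward_quad_score:
  fixes p :: "real ^ 'n::finite"
  shows "(expected_reward quad_score has_derivative
          (\<lambda>h. (4 *\<^sub>R p - (2 * (p \<bullet> (\<chi> i. 1))) *\<^sub>R p - (p \<bullet> p) *\<^sub>R (\<chi> i. 1)) \<bullet> h)) (at p)"
  unfolding expected_reward_quad_score[abs_def]
  by (rule derivative_eq_intros refl)+ (simp add: fun_eq_iff algebra_simps inner_commute)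

lemma exposure_quad_score:
  "exposure quad_score p = 4 *\<^sub>R p - (2 * (p \<bullet> (\<chi> i. 1))) *\<^sub>R p - (p \<bullet> p) *\<^sub>R (\<chi> i. 1)"
  by (rule exposure_eqI[OF has_derivative_expected_reward_quad_score])

lemma proj0_add_ones: "proj0 (x + c *\<^sub>R (\<chi> i. 1) :: real ^ 'n::finite) = proj0 x"
  by (simp add: proj0_def sum.distrib vec_eq_iff field_simps)

lemma linear_proj0: "linear (proj0 :: real ^ 'n::finite \<Rightarrow> real ^ 'n)"
  unfolding linear_iff
  by (auto simp: proj0_def vec_eq_iff sum.distrib sum_distrib_left add_divide_distrib algebra_simps)

lemma proj0_exposure_quad_score:
  assumes "p \<in> prob_simplex"
  shows "proj0 (exposure quad_score p) = proj0 (2 *\<^sub>R p)"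
proof -
  have "p \<bullet> (\<chi> i. 1) = 1"
    using assms by (simp add: prob_simplex_def inner_vec_def)
  then have "exposure quad_score p = 2 *\<^sub>R p + (- (p \<bullet> p)) *\<^sub>R (\<chi> i. 1)"
    by (simp add: exposure_quad_score vec_eq_iff)
  then show ?thesis
    by (simp only: proj0_add_ones)
qed

lemma convex_exposure_quad_score:
  assumes "convex D" and "D \<subseteq> prob_simplex"
  shows "convex_exposure quad_score D"
proof -
  have "(\<lambda>p. proj0 (exposure quad_score p)) ` D = (proj0 \<circ> scaleR 2) ` D"
    using assms(2) by (auto simp: proj0_exposure_quad_score intro!: image_cong)
  moreover have "linear (proj0 \<circ> scaleR (2::real) :: real ^ 'n \<Rightarrow> real ^ 'n)"
    by (intro linear_compose linear_proj0 linear_scaleR)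
  ultimately show ?thesis
    unfolding convex_exposure_def using convex_linear_image assms(1) by metis
qed

theorem propositionF3:
  fixes D :: "(real ^ 'n::finite) set"
  assumes "forecast_domain D"
  shows "convex_exposure quad_score D"
  using assms by (simp add: forecast_domain_def convex_exposure_quad_score)

end
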